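(* Let $g(z)=\frac{1+z^2}{1-z-z^2}$ (the generating function of the modified Lucas numbers $1,1,3,4,7,11,\dots$) and $$f(z)=\frac{1-z-z^2-\sqrt{z^4+10z^3-13z^2-10z+1}}{4-2z},$$ where the square root is the formal power series with constant term $1$. Then $f(z)$ is a formal power series with $f(0)=0$ and $f'(0)\neq 0$, and the Riordan matrix $(g(z),f(z))$ is a pseudo-involution.
   Context: A Riordan matrix is a pair $(g(z),f(z))$ of formal power series over $\mathbb{C}$ with $g(z)=\sum_{n\ge 0} g_n z^n$, $g_0\neq 0$, and $f(z)=\sum_{n\ge 1} f_n z^n$ with $f_1\neq 0$; it represents the infinite lower-triangular matrix whose $k$-th column ($k\ge 0$) has generating function $g(z)f(z)^k$. Riordan matrices form a group under matrix multiplication, where $(g(z),f(z))*(h(z),l(z))=(g(z)h(f(z)),\,l(f(z)))$ and the identity is $(1,z)$. Let $M=(1,-z)$. A Riordan matrix $L$ is called a pseudo-involution if $(L*M)*(L*M)=(1,z)$. *)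

theory Defs
  imports Complex_Main "HOL-Computational_Algebra.Formal_Power_Series"
begin

text \<open>A Riordan matrix is represented by its pair (g, f) of formal power series
  with g_0 \<noteq> 0, f_0 = 0, f_1 \<noteq> 0.\<close>
definition is_riordan :: "complex fps \<times> complex fps \<Rightarrow> bool" where
  "is_riordan L \<longleftrightarrow> fps_nth (fst L) 0 \<noteq> 0 \<and> fps_nth (snd L) 0 = 0 \<and> fps_nth (snd L) 1 \<noteq> 0"

definition riordan_mult :: "complex fps \<times> complex fps \<Rightarrow> complex fps \<times> complex fps \<Rightarrow> complex fps \<times> complex fps" where
  "riordan_mult L K = (fst L * (fst K oo snd L), snd K oo snd L)"

definition riordan_M :: "complex fps \<times> complex fps" where
  "riordan_M = (1, - fps_X)"

definition pseudo_involution :: "complex fps \<times> complex fps \<Rightarrow> bool" where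
  "pseudo_involution L \<longleftrightarrow>
     riordan_mult (riordan_mult L riordan_M) (riordan_mult L riordan_M) = (1, fps_X)"

definition fps_sqrt1 :: "complex fps \<Rightarrow> complex fps" where
  "fps_sqrt1 P = (THE s. fps_nth s 0 = 1 \<and> s ^ 2 = P)"

end

theory Submission
  imports Defs
begin

unbundle fps_syntax

text \<open>Put \<open>h = -f\<close>. Clearing the denominator and squaring away the square root shows that
  \<open>h\<close> is the root with \<open>h(0) = 0\<close> of the quadratic equation \<open>K(z, h) = 0\<close>, where
  \<open>K(x, y) = (2 - x) y\<^sup>2 + (1 - x - x\<^sup>2) y + x + 2 x\<^sup>2\<close> is symmetric in \<open>x\<close> and \<open>y\<close>.
  Composing with \<open>h\<close> gives \<open>K(h, h \<circ> h) = 0 = K(h, z)\<close>, and the two roots of \<open>K(h, -)\<close> differ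
  already in their constant terms, so \<open>h \<circ> h = z\<close>. Moreover \<open>K(x, y) = 0\<close> forces
  \<open>(1 + x\<^sup>2)(1 + y\<^sup>2) = (1 - x - x\<^sup>2)(1 - y - y\<^sup>2)\<close>, i.e. \<open>g(z) g(h(z)) = 1\<close>. These two identities
  say exactly that \<open>(g, f) * M\<close>, which is \<open>(g, h)\<close>, is an involution.\<close>

lemma fps_sqrt1_eqI:
  fixes s :: "complex fps"
  assumes s0: "s $ 0 = 1" and s_sq: "s ^ 2 = D"
  shows "fps_sqrt1 D = s"
  unfolding fps_sqrt1_def
proof (rule the_equality)
  show "s $ 0 = 1 \<and> s ^ 2 = D" using s0 s_sq by simp
next
  fix t :: "complex fps"
  assume t: "t $ 0 = 1 \<and> t ^ 2 = D"
  have "(t - s) * (t + s) = t ^ 2 - s ^ 2" by algebra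
  then have "(t - s) * (t + s) = 0" using t s_sq by simp
  moreover have "t + s \<noteq> 0" using t s0 by (intro fps_nonzeroI[of _ 0]) simp
  ultimately show "t = s" by simp
qed

lemma fps_sqrt1:
  fixes D :: "complex fps"
  assumes "D $ 0 = 1"
  shows "fps_sqrt1 D $ 0 = 1" and "(fps_sqrt1 D) ^ 2 = D"
proof -
  define s where "s = fps_radical (\<lambda>_ _. 1) 2 D"
  have s0: "s $ 0 = 1" by (simp add: s_def)
  have s_sq: "s ^ 2 = D"
    using power_radical[of D "\<lambda>_ _. 1" 1] assms by (simp add: s_def numeral_2_eq_2)
  show "fps_sqrt1 D $ 0 = 1" "(fps_sqrt1 D) ^ 2 = D"
    using fps_sqrt1_eqI[OF s0 s_sq] s0 s_sq by simp_all
qed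

lemma riordan_mult_M:
  assumes "f $ 0 = 0"
  shows "riordan_mult (g, f) riordan_M = (g, - f)"
  using assms by (simp add: riordan_mult_def riordan_M_def fps_compose_uminus)

lemma pseudo_involution_iff:
  assumes "f $ 0 = 0"
  shows "pseudo_involution (g, f) \<longleftrightarrow> g * (g oo - f) = 1 \<and> (- f) oo (- f) = fps_X"
  unfolding pseudo_involution_def riordan_mult_M[OF assms] by (simp add: riordan_mult_def)

definition lucas_kernel :: "'a::comm_ring_1 \<Rightarrow> 'a \<Rightarrow> 'a" where
  "lucas_kernel x y = (2 - x) * y ^ 2 + (1 - x - x ^ 2) * y + x + 2 * x ^ 2"

lemma lucas_kernel_commute: "lucas_kernel x y = lucas_kernel y x"
  unfolding lucas_kernel_def by (simp add: algebra_simps power2_eq_square)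

lemma lucas_kernel_diff:
  "lucas_kernel x y - lucas_kernel x y' = (y - y') * ((2 - x) * (y + y') + 1 - x - x ^ 2)"
  unfolding lucas_kernel_def by (simp add: algebra_simps power2_eq_square)

lemma lucas_kernel_reciprocal:
  "(1 + x ^ 2) * (1 + y ^ 2) - (1 - x - x ^ 2) * (1 - y - y ^ 2) = lucas_kernel x y"
  unfolding lucas_kernel_def by (simp add: algebra_simps power2_eq_square)

lemma fps_compose_lucas_kernel:
  fixes p q k :: "'a::idom fps"
  assumes "k $ 0 = 0"
  shows "lucas_kernel p q oo k = lucas_kernel (p oo k) (q oo k)"
  using assms
  by (simp add: lucas_kernel_def fps_compose_add_distrib fps_compose_sub_distrib
      fps_compose_mult_distrib fps_compose_power[symmetric])

lemma lucas_kernel_root_involution: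
  fixes h :: "'a::idom fps"
  assumes h0: "h $ 0 = 0" and root: "lucas_kernel fps_X h = 0"
  shows "h oo h = fps_X"
proof -
  have "lucas_kernel h (h oo h) = lucas_kernel fps_X h oo h"
    using h0 by (simp add: fps_compose_lucas_kernel)
  moreover have "lucas_kernel h fps_X = 0"
    using root by (simp add: lucas_kernel_commute)
  ultimately have "((h oo h) - fps_X) * ((2 - h) * ((h oo h) + fps_X) + 1 - h - h ^ 2) = 0"
    using root lucas_kernel_diff[of h "h oo h" fps_X] by simp
  moreover have "(2 - h) * ((h oo h) + fps_X) + 1 - h - h ^ 2 \<noteq> 0"
    using h0 by (intro fps_nonzeroI[of _ 0]) (simp add: power2_eq_square)
  ultimately show ?thesis by (metis mult_eq_0_iff right_minus_eq)
qed

lemma lucas_gf_reciprocal: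
  fixes h :: "'a::field fps"
  defines "g \<equiv> (1 + fps_X ^ 2) / (1 - fps_X - fps_X ^ 2)"
  assumes h0: "h $ 0 = 0" and root: "lucas_kernel fps_X h = 0"
  shows "g * (g oo h) = 1"
proof -
  define B :: "'a fps" where "B = 1 - fps_X - fps_X ^ 2"
  have gB: "g * B = 1 + fps_X ^ 2"
    unfolding g_def B_def by (rule unit_div_mult_self) simp
  have "(g oo h) * (B oo h) = 1 + h ^ 2"
    using arg_cong[OF gB, of "\<lambda>p. p oo h"] h0
    by (simp add: fps_compose_add_distrib fps_compose_mult_distrib fps_compose_power[symmetric])
  then have "(g * (g oo h)) * (B * (B oo h)) = (1 + fps_X ^ 2) * (1 + h ^ 2)"
    using gB by (metis mult.assoc mult.left_commute)
  also have "\<dots> = B * (B oo h)"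
    using lucas_kernel_reciprocal[of fps_X h] root h0
    by (simp add: B_def fps_compose_sub_distrib fps_compose_power[symmetric])
  finally have "(g * (g oo h)) * (B * (B oo h)) = 1 * (B * (B oo h))" by simp
  moreover have "B * (B oo h) \<noteq> 0"
    by (intro fps_nonzeroI[of _ 0]) (simp add: B_def)
  ultimately show ?thesis by (simp only: mult_cancel_right) simp
qed

lemma lucas_kernel_of_sqrt:
  fixes x s f :: "'a::idom"
  assumes s_sq: "s ^ 2 = x ^ 4 + 10 * x ^ 3 - 13 * x ^ 2 - 10 * x + 1"
    and f: "f * (4 - 2 * x) = 1 - x - x ^ 2 - s"
    and nonzero: "4 * (2 - x) \<noteq> 0"
  shows "lucas_kernel x (- f) = 0"
proof -
  have s: "1 - x - x ^ 2 - f * (4 - 2 * x) = s" using f by simp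
  have "4 * (2 - x) * lucas_kernel x (- f)
      = (1 - x - x ^ 2 - f * (4 - 2 * x)) ^ 2 - (x ^ 4 + 10 * x ^ 3 - 13 * x ^ 2 - 10 * x + 1)"
    unfolding lucas_kernel_def by algebra
  also have "\<dots> = 0" unfolding s s_sq by simp
  finally show ?thesis using nonzero by simp
qed

lemma lucas_root_coeffs:
  fixes f s :: "complex fps"
  assumes s0: "s $ 0 = 1"
    and s_sq: "s ^ 2 = fps_X ^ 4 + 10 * fps_X ^ 3 - 13 * fps_X ^ 2 - 10 * fps_X + 1"
    and f: "f * (4 - 2 * fps_X) = 1 - fps_X - fps_X ^ 2 - s"
  shows "f $ 0 = 0" and "f $ 1 = 1"
proof -
  have "(s ^ 2) $ 1 = -10" unfolding s_sq by (simp add: fps_numeral_nth)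
  then have s1: "s $ 1 = -5" using s0 by (simp add: power2_eq_square fps_mult_nth_1)
  have "(f * (4 - 2 * fps_X)) $ 0 = 0" unfolding f using s0 by simp
  then show f0: "f $ 0 = 0" by simp
  have "(f * (4 - 2 * fps_X)) $ 1 = 4" unfolding f using s1 by (simp add: fps_numeral_nth)
  then show "f $ 1 = 1" using f0 by (simp add: fps_mult_nth_1 fps_numeral_nth)
qed

theorem mainTheorem11:
  fixes g f :: "complex fps"
  defines "g \<equiv> (1 + fps_X ^ 2) / (1 - fps_X - fps_X ^ 2)"
  defines "f \<equiv> (1 - fps_X - fps_X ^ 2
                 - fps_sqrt1 (fps_X ^ 4 + 10 * fps_X ^ 3 - 13 * fps_X ^ 2 - 10 * fps_X + 1))
               / (4 - 2 * fps_X)"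
  shows "fps_nth f 0 = 0 \<and> fps_nth f 1 \<noteq> 0 \<and> is_riordan (g, f) \<and> pseudo_involution (g, f)"
proof -
  define S where "S = fps_sqrt1 (fps_X ^ 4 + 10 * fps_X ^ 3 - 13 * fps_X ^ 2 - 10 * fps_X + 1)"
  have S0: "S $ 0 = 1" and S_sq: "S ^ 2 = fps_X ^ 4 + 10 * fps_X ^ 3 - 13 * fps_X ^ 2 - 10 * fps_X + 1"
    unfolding S_def by (simp_all add: fps_sqrt1)
  have f_den: "f * (4 - 2 * fps_X) = 1 - fps_X - fps_X ^ 2 - S"
    unfolding f_def S_def by (rule unit_div_mult_self) simp
  have f0: "f $ 0 = 0" and f1: "f $ 1 = 1"
    using lucas_root_coeffs[OF S0 S_sq f_den] by simp_all
  have root: "lucas_kernel fps_X (- f) = 0"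
    by (rule lucas_kernel_of_sqrt[OF S_sq f_den]) (intro fps_nonzeroI[of _ 0], simp)
  have inv: "(- f) oo (- f) = fps_X"
    using f0 root by (intro lucas_kernel_root_involution) simp_all
  have recip: "g * (g oo - f) = 1"
    unfolding g_def using f0 root by (intro lucas_gf_reciprocal) simp_all
  then have "g $ 0 \<noteq> 0" by (metis fps_compose_nth_0 fps_mult_nth_0 one_neq_zero fps_one_nth mult_zero_left)
  then show ?thesis
    using f0 f1 inv recip by (simp add: is_riordan_def pseudo_involution_iff)
qed

end
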